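(* Let $S_0>0$, let $0<t_1<\dots<t_n$ be maturities and, for each $i$, let $\mathcal{K}_i\subset\mathbb{R}_+$ be a finite set of strikes with given call prices $\mathcal{C}_i^K$, $K\in\mathcal{K}_i$. Define $\mathcal{M}_n$ as the set of probability measures $\mathbb{P}$ on $\mathbb{R}_+^n$ (the law of $(S_{t_1},\dots,S_{t_n})$, with $S_{t_0}:=S_0$ deterministic) such that $\mathbb{E}^{\mathbb{P}}[(S_{t_i}-K)_+]=\mathcal{C}_i^K$ for all $K\in\mathcal{K}_i$ and $\mathbb{E}^{\mathbb{P}}[S_{t_i}\mid S_0,\dots,S_{t_{i-1}}]=S_{t_{i-1}}$ for $i=1,\dots,n$. Define $\mathcal{M}_n^{\mathrm{Markov}}$ as the set of probability measures $\mathbb{P}$ on $\mathbb{R}_+^n$ satisfying the Markov property such that $\mathbb{E}^{\mathbb{P}}[(S_{t_i}-K)_+]=\mathcal{C}_i^K$ for all $K\in\mathcal{K}_i$ and $\mathbb{E}^{\mathbb{P}}[S_{t_i}\mid S_{t_{i-1}}]=S_{t_{i-1}}$ for $i=1,\dots,n$. Then $\mathcal{M}_n^{\mathrm{Markov}}$ is non-empty if and only if $\mathcal{M}_n$ is non-empty. In particular, if the market data are arbitrage-free (i.e. $\mathcal{M}_n\neq\emptyset$), they can be attained by a martingale measure in $\mathcal{M}_n^{\mathrm{Markov}}$.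
   Context: Zero interest rates and no dividends are assumed, so call prices are expectations of $(S_{t_i}-K)_+$ under a martingale measure. *)

theory Defs
  imports "HOL-Probability.Probability"
begin

text \<open>Paths: a point x of R_+^n is a function nat => real, coordinate x i = S_{t_i}
  for i in {1..n}. The deterministic initial value S_0 is prepended by Spr.\<close>

definition Spr :: "real \<Rightarrow> (nat \<Rightarrow> real) \<Rightarrow> nat \<Rightarrow> real" where
  "Spr S0 x i = (if i = 0 then S0 else x i)"

definition state_space :: "nat \<Rightarrow> (nat \<Rightarrow> real) measure" where
  "state_space n = (\<Pi>\<^sub>M i\<in>{1..n}. restrict_space borel {0::real..})"

text \<open>sigma(S_0, S_{t_1}, ..., S_{t_i}) (S_0 deterministic, so only coordinates 1..i matter).\<close>
definition past_alg :: "(nat \<Rightarrow> real) measure \<Rightarrow> nat \<Rightarrow> (nat \<Rightarrow> real) measure" where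
  "past_alg P i = vimage_algebra (space P) (\<lambda>x. restrict x {1..i}) (\<Pi>\<^sub>M j\<in>{1..i}. (borel :: real measure))"

definition curr_alg :: "real \<Rightarrow> (nat \<Rightarrow> real) measure \<Rightarrow> nat \<Rightarrow> (nat \<Rightarrow> real) measure" where
  "curr_alg S0 P i = vimage_algebra (space P) (\<lambda>x. Spr S0 x i) (borel :: real measure)"

definition calls_fit :: "nat \<Rightarrow> (nat \<Rightarrow> real set) \<Rightarrow> (nat \<Rightarrow> real \<Rightarrow> real) \<Rightarrow> (nat \<Rightarrow> real) measure \<Rightarrow> bool" where
  "calls_fit n Ks C P \<longleftrightarrow> (\<forall>i\<in>{1..n}. \<forall>K\<in>Ks i.
      integrable P (\<lambda>x. max (x i - K) 0) \<and> (\<integral>x. max (x i - K) 0 \<partial>P) = C i K)"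

definition markov_prop :: "real \<Rightarrow> nat \<Rightarrow> (nat \<Rightarrow> real) measure \<Rightarrow> bool" where
  "markov_prop S0 n P \<longleftrightarrow> (\<forall>i\<in>{1..<n}. \<forall>A\<in>sets (borel :: real measure).
      AE x in P. real_cond_exp P (past_alg P i) (\<lambda>y. indicator A (y (Suc i))) x
               = real_cond_exp P (curr_alg S0 P i) (\<lambda>y. indicator A (y (Suc i))) x)"

definition M_n :: "real \<Rightarrow> nat \<Rightarrow> (nat \<Rightarrow> real set) \<Rightarrow> (nat \<Rightarrow> real \<Rightarrow> real) \<Rightarrow> (nat \<Rightarrow> real) measure set" where
  "M_n S0 n Ks C = {P. prob_space P \<and> sets P = sets (state_space n) \<and> calls_fit n Ks C P \<and>
      (\<forall>i\<in>{1..n}. integrable P (\<lambda>x. x i) \<and>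
         (AE x in P. real_cond_exp P (past_alg P (i - 1)) (\<lambda>y. y i) x = Spr S0 x (i - 1)))}"

definition M_n_Markov :: "real \<Rightarrow> nat \<Rightarrow> (nat \<Rightarrow> real set) \<Rightarrow> (nat \<Rightarrow> real \<Rightarrow> real) \<Rightarrow> (nat \<Rightarrow> real) measure set" where
  "M_n_Markov S0 n Ks C = {P. prob_space P \<and> sets P = sets (state_space n) \<and> markov_prop S0 n P \<and>
      calls_fit n Ks C P \<and>
      (\<forall>i\<in>{1..n}. integrable P (\<lambda>x. x i) \<and>
         (AE x in P. real_cond_exp P (curr_alg S0 P (i - 1)) (\<lambda>y. y i) x = Spr S0 x (i - 1)))}"

end

theory Submission
  imports Defs
begin

text \<open>A Markov martingale is a martingale: when the conditional law of the next price given
  the whole past agrees with the one given the current price, so do the conditional means.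

  Conversely, take \<open>P\<close> in \<open>M_n\<close> and call two paths equivalent at date \<open>j\<close> if at every date
  up to \<open>j\<close> they lie above the same quoted strikes. Replacing the price at date \<open>j\<close> by its
  \<open>P\<close>-mean \<open>Y j\<close> over the equivalence class (the cell) of the path gives a finitely valued
  process. It keeps every call price, because on a cell each call payoff with a quoted strike
  is affine in the price; and it is a martingale, because the cells of date \<open>j - 1\<close> are unions
  of cells of date \<open>j\<close>. The Markov chain whose transitions are the conditional laws of \<open>Y j\<close>
  given \<open>Y (j - 1)\<close> has the marginals of \<open>Y\<close>, hence the call prices, and inherits
  \<open>E[Y j | Y (j - 1)] = Y (j - 1)\<close>.\<close>

lemma singleton_in_sets_PiM:
  assumes "\<sigma> \<in> extensional I" "finite I" "\<And>j. j \<in> I \<Longrightarrow> {\<sigma> j} \<in> sets (M j)"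
  shows "{\<sigma>} \<in> sets (Pi\<^sub>M I M)"
proof -
  have "{\<sigma>} = PiE I (\<lambda>j. {\<sigma> j})" using assms(1) by (simp add: PiE_singleton)
  then show ?thesis using sets_PiM_I_finite[OF assms(2,3)] by simp
qed

lemma subalgebra_vimage_algebra:
  assumes "f \<in> measurable M N"
  shows "subalgebra M (vimage_algebra (space M) f N)"
  unfolding subalgebra_def
proof
  have "f \<in> space M \<rightarrow> space N" using measurable_space[OF assms] by auto
  then show "sets (vimage_algebra (space M) f N) \<subseteq> sets M"
    using assms by (auto simp: sets_vimage_algebra2 measurable_sets)
qed simp

lemma (in prob_space) sigma_finite_subalgebra_vimage_algebra:
  assumes "f \<in> measurable M N"
  shows "sigma_finite_subalgebra M (vimage_algebra (space M) f N)"
  by (rule finite_measure_subalgebra_is_sigma_finite)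
    (simp add: finite_measure_subalgebra_def finite_measure_subalgebra_axioms_def
      subalgebra_vimage_algebra[OF assms] finite_measure_axioms)

lemma space_state_space: "space (state_space n) = PiE {1..n} (\<lambda>_. {0::real..})"
  by (simp add: state_space_def space_PiM)

lemma measurable_coordinate:
  assumes "sets Q = sets (state_space n)"
  shows "(\<lambda>x. x j) \<in> borel_measurable Q"
proof (cases "j \<in> {1..n}")
  case True
  have "(\<lambda>x. x j) \<in> measurable (state_space n) (restrict_space borel {0::real..})"
    unfolding state_space_def using True by (rule measurable_component_singleton)
  then have "(\<lambda>x. x j) \<in> borel_measurable (state_space n)"
    by (simp add: measurable_restrict_space2_iff)
  then show ?thesis using measurable_cong_sets[OF assms refl] by blast
next
  case False
  have "space Q = space (state_space n)" using assms by (rule sets_eq_imp_space_eq)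
  then have "\<forall>x\<in>space Q. x j = undefined"
    using False by (auto simp: space_state_space PiE_def extensional_def)
  then show ?thesis using measurable_cong[of Q "\<lambda>x. x j" "\<lambda>_. undefined"] by simp
qed

lemma measurable_Spr:
  assumes "sets Q = sets (state_space n)"
  shows "(\<lambda>x. Spr S0 x j) \<in> borel_measurable Q"
  unfolding Spr_def using measurable_coordinate[OF assms] by simp

lemma measurable_restrict_coordinates:
  assumes "sets Q = sets (state_space n)"
  shows "(\<lambda>x. restrict x I) \<in> measurable Q (\<Pi>\<^sub>M j\<in>I. (borel :: real measure))"
  using measurable_restrict[of I "\<lambda>j x. x j" Q "\<lambda>_. borel"] measurable_coordinate[OF assms]
  by (simp add: restrict_def)

text \<open>Stated with \<open>{Suc 0..i}\<close>, the simp normal form of \<open>{1..i}\<close>.\<close>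

lemma Spr_restrict [simp]: "Spr S0 (restrict x {Suc 0..i}) i = Spr S0 x i"
  by (simp add: Spr_def)

lemma sigma_finite_subalgebra_past_alg:
  assumes "prob_space Q" "sets Q = sets (state_space n)"
  shows "sigma_finite_subalgebra Q (past_alg Q i)"
  unfolding past_alg_def
  by (rule prob_space.sigma_finite_subalgebra_vimage_algebra[OF assms(1)
        measurable_restrict_coordinates[OF assms(2)]])

lemma sigma_finite_subalgebra_curr_alg:
  assumes "prob_space Q" "sets Q = sets (state_space n)"
  shows "sigma_finite_subalgebra Q (curr_alg S0 Q i)"
  unfolding curr_alg_def
  by (rule prob_space.sigma_finite_subalgebra_vimage_algebra[OF assms(1) measurable_Spr[OF assms(2)]])

lemma measurable_Spr_curr_alg: "(\<lambda>x. Spr S0 x k) \<in> borel_measurable (curr_alg S0 Q k)"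
  unfolding curr_alg_def by (rule measurable_vimage_algebra1) auto

lemma measurable_Spr_past_alg: "(\<lambda>x. Spr S0 x k) \<in> borel_measurable (past_alg Q k)"
proof (cases "k = 0")
  case False
  have "(\<lambda>x. restrict x {1..k}) \<in> space Q \<rightarrow> space (\<Pi>\<^sub>M j\<in>{1..k}. (borel::real measure))"
    by (auto simp: space_PiM)
  from measurable_compose[OF measurable_vimage_algebra1[OF this]
      measurable_component_singleton[of k "{1..k}" "\<lambda>_. borel"]]
  show ?thesis using False unfolding past_alg_def by (simp add: Spr_def)
qed (simp add: Spr_def)

lemma sets_past_alg_0:
  assumes "A \<in> sets (past_alg Q 0)"
  shows "A = {} \<or> A = space Q"
proof -
  have "(\<lambda>x. restrict x {1..0::nat}) \<in> space Q \<rightarrow> space (\<Pi>\<^sub>M j\<in>{1..0::nat}. (borel::real measure))"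
    by (auto simp: space_PiM)
  then obtain B where "A = (\<lambda>x. restrict x {1..0::nat}) -` B \<inter> space Q"
    using assms unfolding past_alg_def by (auto simp: sets_vimage_algebra2)
  moreover have "restrict x {1..0::nat} = (\<lambda>_. undefined)" for x :: "nat \<Rightarrow> real" by auto
  ultimately show ?thesis by (cases "(\<lambda>_. undefined) \<in> B") auto
qed

section \<open>Markov martingales are martingales\<close>

lemma emeasure_distr_density_real:
  fixes f X :: "'a \<Rightarrow> real"
  assumes [measurable]: "f \<in> borel_measurable M" "X \<in> borel_measurable M" "B \<in> sets borel"
    and "integrable M f" "AE x in M. 0 \<le> f x"
  shows "emeasure (distr (density M f) borel X) B = ennreal (\<integral>x. f x * indicator B (X x) \<partial>M)"
proof -
  have "emeasure (distr (density M f) borel X) B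
      = (\<integral>\<^sup>+x. ennreal (f x) * indicator (X -` B \<inter> space M) x \<partial>M)"
    by (simp add: emeasure_distr emeasure_density)
  also have "\<dots> = (\<integral>\<^sup>+x. ennreal (f x * indicator B (X x)) \<partial>M)"
    by (rule nn_integral_cong) (auto simp: indicator_def)
  also have "\<dots> = ennreal (\<integral>x. f x * indicator B (X x) \<partial>M)"
  proof (rule nn_integral_eq_integral)
    show "integrable M (\<lambda>x. f x * indicator B (X x))"
      by (rule Bochner_Integration.integrable_bound[OF assms(4)]) (auto simp: indicator_def)
    show "AE x in M. 0 \<le> f x * indicator B (X x)" using assms(5) by eventually_elim auto
  qed
  finally show ?thesis .
qed

text \<open>Both sides are the mean of the law of \<open>X\<close> under the weights \<open>f\<close> and \<open>g\<close>,
  and the hypothesis says that these two laws agree.\<close>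

lemma integral_weighted_eq_of_weighted_indicator_eq:
  fixes f g X :: "'a \<Rightarrow> real"
  assumes [measurable]: "f \<in> borel_measurable M" "g \<in> borel_measurable M" "X \<in> borel_measurable M"
    and "integrable M f" "integrable M g" "AE x in M. 0 \<le> f x" "AE x in M. 0 \<le> g x"
    and eq: "\<And>B. B \<in> sets borel \<Longrightarrow>
      (\<integral>x. f x * indicator B (X x) \<partial>M) = (\<integral>x. g x * indicator B (X x) \<partial>M)"
  shows "(\<integral>x. f x * X x \<partial>M) = (\<integral>x. g x * X x \<partial>M)"
proof -
  have laws: "distr (density M f) borel X = distr (density M g) borel X"
    by (rule measure_eqI) (simp_all add: emeasure_distr_density_real assms eq)
  have "(\<integral>x. f x * X x \<partial>M) = (\<integral>y. y \<partial>distr (density M f) borel X)"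
    using assms(6) by (simp add: integral_distr integral_density)
  also have "\<dots> = (\<integral>x. g x * X x \<partial>M)"
    using assms(7) by (simp add: laws integral_distr integral_density)
  finally show ?thesis .
qed

lemma (in prob_space) integral_indicator_mult_eq_cond_exp_weight:
  assumes F: "sigma_finite_subalgebra M F" and G: "sigma_finite_subalgebra M G"
    and h[measurable]: "h \<in> borel_measurable M" and h_bound: "\<And>x. \<bar>h x\<bar> \<le> 1"
    and same: "AE x in M. real_cond_exp M F h x = real_cond_exp M G h x"
    and A: "A \<in> sets F"
  shows "(\<integral>x. indicator A x * h x \<partial>M) = (\<integral>x. real_cond_exp M G (indicator A) x * h x \<partial>M)"
proof -
  interpret F: sigma_finite_subalgebra M F by (fact F)
  interpret G: sigma_finite_subalgebra M G by (fact G)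
  have AM[measurable]: "A \<in> sets M" using F.subalg A unfolding subalgebra_def by auto
  have int_h: "integrable M h" by (rule integrable_const_bound[where B=1]) (auto simp: h_bound)
  have int_A: "integrable M (indicator A :: _ \<Rightarrow> real)"
    by (rule integrable_const_bound[where B=1]) auto
  let ?w = "real_cond_exp M G (indicator A)"
  have "(\<integral>x. indicator A x * h x \<partial>M) = (\<integral>x. indicator A x * real_cond_exp M F h x \<partial>M)"
    by (rule F.real_cond_exp_intg(2)[symmetric]) (use integrable_mult_indicator[OF AM int_h] A in auto)
  also have "\<dots> = (\<integral>x. real_cond_exp M G h x * indicator A x \<partial>M)"
    by (rule integral_cong_AE) (use same in auto)
  also have "\<dots> = (\<integral>x. real_cond_exp M G h x * ?w x \<partial>M)"
    by (rule G.real_cond_exp_intg(2)[symmetric])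
      (use integrable_mult_indicator[OF AM G.real_cond_exp_int(1)[OF int_h]] in \<open>auto simp: mult.commute\<close>)
  also have "\<dots> = (\<integral>x. ?w x * h x \<partial>M)"
    unfolding mult.commute[of "real_cond_exp M G h _"]
  proof (rule G.real_cond_exp_intg(2))
    show "integrable M (\<lambda>x. ?w x * h x)"
      by (rule Bochner_Integration.integrable_bound[OF G.real_cond_exp_int(1)[OF int_A]])
        (auto simp: abs_mult intro!: mult_left_le_one_le mult_left_le[OF h_bound])
  qed auto
  finally show ?thesis .
qed

text \<open>The conclusion is \<open>E[X | F] = Y\<close> in integrated form; \<open>G\<close> need not be contained in \<open>F\<close>.\<close>

lemma (in prob_space) set_integral_eq_of_cond_law_eq:
  assumes F: "sigma_finite_subalgebra M F" and G: "sigma_finite_subalgebra M G"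
    and X[measurable]: "X \<in> borel_measurable M" and int_X: "integrable M X"
    and int_Y: "integrable M Y" and Y_G: "Y \<in> borel_measurable G"
    and mean: "AE x in M. real_cond_exp M G X x = Y x"
    and law: "\<And>B. B \<in> sets borel \<Longrightarrow> AE x in M.
      real_cond_exp M F (\<lambda>x. indicator B (X x)) x = real_cond_exp M G (\<lambda>x. indicator B (X x)) x"
    and A: "A \<in> sets F"
  shows "(\<integral>x\<in>A. X x \<partial>M) = (\<integral>x\<in>A. Y x \<partial>M)"
proof -
  interpret F: sigma_finite_subalgebra M F by (fact F)
  interpret G: sigma_finite_subalgebra M G by (fact G)
  have AM[measurable]: "A \<in> sets M" using F.subalg A unfolding subalgebra_def by auto
  have [measurable]: "Y \<in> borel_measurable M" by (rule measurable_from_subalg[OF G.subalg Y_G])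
  have int_A: "integrable M (indicator A :: _ \<Rightarrow> real)"
    by (rule integrable_const_bound[where B=1]) auto
  define w where "w = real_cond_exp M G (indicator A)"
  have w_G: "w \<in> borel_measurable G" and w_M[measurable]: "w \<in> borel_measurable M"
    unfolding w_def by simp_all
  have int_w: "integrable M w" unfolding w_def by (rule G.real_cond_exp_int(1)[OF int_A])
  have w_nonneg: "AE x in M. 0 \<le> w x" unfolding w_def by (rule G.real_cond_exp_pos) auto
  have w_le_1: "AE x in M. w x \<le> 1" unfolding w_def by (rule G.real_cond_exp_le_c) (auto simp: int_A)
  have "(\<integral>x. indicator A x * X x \<partial>M) = (\<integral>x. w x * X x \<partial>M)"
  proof (rule integral_weighted_eq_of_weighted_indicator_eq)
    fix B :: "real set" assume [measurable]: "B \<in> sets borel"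
    show "(\<integral>x. indicator A x * indicator B (X x) \<partial>M) = (\<integral>x. w x * indicator B (X x) \<partial>M)"
      unfolding w_def
      by (rule integral_indicator_mult_eq_cond_exp_weight[OF F G _ _ law A]) (auto simp: indicator_def)
  qed (auto simp: int_A int_w w_nonneg)
  also have "\<dots> = (\<integral>x. w x * real_cond_exp M G X x \<partial>M)"
  proof (rule G.real_cond_exp_intg(2)[symmetric])
    show "integrable M (\<lambda>x. w x * X x)"
      by (rule Bochner_Integration.integrable_bound[OF int_X])
        (use w_nonneg w_le_1 in \<open>auto simp: abs_mult intro!: mult_left_le_one_le\<close>)
  qed (auto simp: w_G)
  also have "\<dots> = (\<integral>x. Y x * w x \<partial>M)"
    by (rule integral_cong_AE) (use mean in auto)
  also have "\<dots> = (\<integral>x. Y x * indicator A x \<partial>M)"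
    unfolding w_def
    by (rule G.real_cond_exp_intg(2))
      (use integrable_mult_indicator[OF AM int_Y] Y_G in \<open>auto simp: mult.commute\<close>)
  finally show ?thesis by (simp add: set_lebesgue_integral_def mult.commute)
qed

lemma martingale_past_of_markov:
  assumes Q: "prob_space Q" "sets Q = sets (state_space n)" and markov: "markov_prop S0 n Q"
    and integrable: "\<forall>i\<in>{1..n}. integrable Q (\<lambda>x. x i)"
    and martingale: "\<forall>i\<in>{1..n}. AE x in Q.
      real_cond_exp Q (curr_alg S0 Q (i - 1)) (\<lambda>y. y i) x = Spr S0 x (i - 1)"
    and i: "i \<in> {1..n}"
  shows "AE x in Q. real_cond_exp Q (past_alg Q (i - 1)) (\<lambda>y. y i) x = Spr S0 x (i - 1)"
proof -
  interpret prob_space Q by (fact Q(1))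
  obtain k where ik: "i = Suc k" using i by (cases i) auto
  note F = sigma_finite_subalgebra_past_alg[OF Q, of k]
  note G = sigma_finite_subalgebra_curr_alg[OF Q, of S0 k]
  have X[measurable]: "(\<lambda>x. x i) \<in> borel_measurable Q" by (rule measurable_coordinate[OF Q(2)])
  have [measurable]: "(\<lambda>x. Spr S0 x k) \<in> borel_measurable Q" by (rule measurable_Spr[OF Q(2)])
  have int_X: "integrable Q (\<lambda>x. x i)" using integrable i by auto
  have int_Y: "integrable Q (\<lambda>x. Spr S0 x k)"
    using integrable ik i by (cases k) (auto simp: Spr_def)
  have mean: "AE x in Q. real_cond_exp Q (curr_alg S0 Q k) (\<lambda>y. y i) x = Spr S0 x k"
    using martingale[rule_format, OF i] ik by simp
  have "(\<integral>x\<in>A. x i \<partial>Q) = (\<integral>x\<in>A. Spr S0 x k \<partial>Q)" if A: "A \<in> sets (past_alg Q k)" for A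
  proof (cases "k = 0")
    case True
    interpret G: sigma_finite_subalgebra Q "curr_alg S0 Q k" by (fact G)
    have "(\<integral>x. x i \<partial>Q) = (\<integral>x. real_cond_exp Q (curr_alg S0 Q k) (\<lambda>y. y i) x \<partial>Q)"
      using G.real_cond_exp_int(2)[OF int_X] by simp
    also have "\<dots> = (\<integral>x. Spr S0 x k \<partial>Q)" by (rule integral_cong_AE) (use mean in auto)
    moreover have "(\<integral>x\<in>space Q. f x \<partial>Q) = (\<integral>x. f x \<partial>Q)" for f :: "_ \<Rightarrow> real"
      unfolding set_lebesgue_integral_def by (rule Bochner_Integration.integral_cong) auto
    ultimately show ?thesis
      using sets_past_alg_0[of A Q] A True by (auto simp: set_lebesgue_integral_def)
  next
    case False
    then have "k \<in> {1..<n}" using i ik by auto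
    then show ?thesis
      using set_integral_eq_of_cond_law_eq[OF F G X int_X int_Y measurable_Spr_curr_alg mean _ A] markov
      unfolding markov_prop_def ik by blast
  qed
  then show ?thesis
    unfolding ik using sigma_finite_subalgebra.real_cond_exp_charact[OF F] int_X int_Y measurable_Spr_past_alg
    by (simp add: ik)
qed

lemma M_n_Markov_subset_M_n: "M_n_Markov S0 n Ks C \<subseteq> M_n S0 n Ks C"
  unfolding M_n_Markov_def M_n_def using martingale_past_of_markov[of _ n S0] by auto

section \<open>Conditional expectations under finitely supported laws\<close>

definition fibre_mean :: "'a set \<Rightarrow> ('a \<Rightarrow> real) \<Rightarrow> ('a \<Rightarrow> 'b) \<Rightarrow> ('a \<Rightarrow> real) \<Rightarrow> 'b \<Rightarrow> real" where
  "fibre_mean S w \<phi> g z =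
    (\<Sum>\<sigma>\<in>{\<sigma>\<in>S. \<phi> \<sigma> = z}. w \<sigma> * g \<sigma>) / (\<Sum>\<sigma>\<in>{\<sigma>\<in>S. \<phi> \<sigma> = z}. w \<sigma>)"

lemma sum_mult_fibre_mean:
  assumes S: "finite S" and w: "\<And>\<sigma>. \<sigma> \<in> S \<Longrightarrow> 0 < w \<sigma>"
  shows "(\<Sum>\<sigma>\<in>S. w \<sigma> * (u (\<phi> \<sigma>) * fibre_mean S w \<phi> g (\<phi> \<sigma>)))
       = (\<Sum>\<sigma>\<in>S. w \<sigma> * (u (\<phi> \<sigma>) * g \<sigma>))"
proof -
  define den where "den z = (\<Sum>\<sigma>\<in>{\<sigma>\<in>S. \<phi> \<sigma> = z}. w \<sigma>)" for z
  have den_pos: "den z > 0" if z: "z \<in> \<phi> ` S" for z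
  proof -
    obtain \<sigma> where \<sigma>: "\<sigma> \<in> S" "\<phi> \<sigma> = z" using z by blast
    have "w \<sigma> \<le> den z" unfolding den_def
      by (rule member_le_sum) (use \<sigma> S w in \<open>auto intro: less_imp_le\<close>)
    with w[OF \<sigma>(1)] show ?thesis by simp
  qed
  have "(\<Sum>\<sigma>\<in>S. w \<sigma> * (u (\<phi> \<sigma>) * fibre_mean S w \<phi> g (\<phi> \<sigma>)))
      = (\<Sum>z\<in>\<phi> ` S. \<Sum>\<sigma>\<in>{\<sigma>\<in>S. \<phi> \<sigma> = z}. w \<sigma> * (u z * fibre_mean S w \<phi> g z))"
    by (rule sum.image_gen[OF S, THEN trans]) (auto intro!: sum.cong)
  also have "\<dots> = (\<Sum>z\<in>\<phi> ` S. u z * fibre_mean S w \<phi> g z * den z)"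
    unfolding den_def sum_distrib_left by (simp add: sum_distrib_right mult.commute)
  also have "\<dots> = (\<Sum>z\<in>\<phi> ` S. u z * (\<Sum>\<sigma>\<in>{\<sigma>\<in>S. \<phi> \<sigma> = z}. w \<sigma> * g \<sigma>))"
  proof (rule sum.cong)
    fix z assume "z \<in> \<phi> ` S"
    with den_pos[of z] show "u z * fibre_mean S w \<phi> g z * den z
        = u z * (\<Sum>\<sigma>\<in>{\<sigma>\<in>S. \<phi> \<sigma> = z}. w \<sigma> * g \<sigma>)"
      by (simp add: fibre_mean_def den_def)
  qed simp
  also have "\<dots> = (\<Sum>z\<in>\<phi> ` S. \<Sum>\<sigma>\<in>{\<sigma>\<in>S. \<phi> \<sigma> = z}. w \<sigma> * (u z * g \<sigma>))"
    by (simp add: sum_distrib_left algebra_simps)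
  also have "\<dots> = (\<Sum>\<sigma>\<in>S. w \<sigma> * (u (\<phi> \<sigma>) * g \<sigma>))"
    by (rule sum.image_gen[OF S, THEN trans, symmetric]) (auto intro!: sum.cong)
  finally show ?thesis .
qed

lemma borel_measurable_agreeing_on_finite:
  fixes \<psi> :: "'b \<Rightarrow> real"
  assumes "finite Z" and "\<And>z. z \<in> Z \<Longrightarrow> {z} \<in> sets N"
  shows "\<exists>\<psi>'\<in>borel_measurable N. \<forall>z\<in>Z. \<psi>' z = \<psi> z"
proof (intro bexI ballI)
  let ?\<psi>' = "\<lambda>z. \<Sum>z'\<in>Z. indicator {z'} z * \<psi> z'"
  show "?\<psi>' \<in> borel_measurable N"
    using assms(2) by (intro borel_measurable_sum borel_measurable_times) auto
  fix z assume "z \<in> Z"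
  then show "?\<psi>' z = \<psi> z"
    using assms(1) by (simp add: indicator_def sum.delta' if_distrib[of "\<lambda>c. c * _"] cong: if_cong)
qed

text \<open>The map \<open>e\<close> sends the points outside the support of \<open>p\<close> into \<open>space M\<close>, so that
  \<open>p\<close> can be read as a law on \<open>M\<close>.\<close>

locale finite_pmf_on =
  fixes p :: "'a pmf" and M :: "'a measure" and e :: "'a \<Rightarrow> 'a"
  assumes finite_support: "finite (set_pmf p)"
    and e_space: "e \<in> UNIV \<rightarrow> space M"
    and e_support: "\<And>\<sigma>. \<sigma> \<in> set_pmf p \<Longrightarrow> e \<sigma> = \<sigma>"
    and singleton_sets: "\<And>\<sigma>. \<sigma> \<in> set_pmf p \<Longrightarrow> {\<sigma>} \<in> sets M"
begin

definition law :: "'a measure" where "law = distr (measure_pmf p) M e"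

lemma e_measurable: "e \<in> measurable (measure_pmf p) M"
  using e_space by simp

lemma prob_space_law: "prob_space law"
  unfolding law_def by (rule measure_pmf.prob_space_distr[OF e_measurable])

lemma sets_law [measurable_cong]: "sets law = sets M" and space_law: "space law = space M"
  by (simp_all add: law_def)

lemma support_in_space: "\<sigma> \<in> set_pmf p \<Longrightarrow> \<sigma> \<in> space M"
  by (metis e_space e_support UNIV_I Pi_mem)

lemma integrable_law:
  assumes "f \<in> borel_measurable M"
  shows "integrable law (f :: _ \<Rightarrow> real)"
  unfolding law_def
  by (subst integrable_distr_eq[OF e_measurable assms]) (rule integrable_measure_pmf_finite[OF finite_support])

lemma integral_law:
  assumes "f \<in> borel_measurable M"
  shows "(\<integral>x. f x \<partial>law) = (\<Sum>\<sigma>\<in>set_pmf p. pmf p \<sigma> * f \<sigma>)"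
proof -
  have "(\<integral>x. f x \<partial>law) = (\<integral>\<sigma>. f (e \<sigma>) \<partial>measure_pmf p)"
    unfolding law_def by (rule integral_distr[OF e_measurable assms])
  also have "\<dots> = (\<Sum>\<sigma>\<in>set_pmf p. f (e \<sigma>) * pmf p \<sigma>)"
    by (rule integral_measure_pmf_real) (auto simp: finite_support)
  finally show ?thesis by (simp add: e_support mult.commute)
qed

lemma AE_law:
  assumes "\<And>\<sigma>. \<sigma> \<in> set_pmf p \<Longrightarrow> P \<sigma>"
  shows "AE x in law. P x"
proof (rule AE_I')
  have "set_pmf p = (\<Union>\<sigma>\<in>set_pmf p. {\<sigma>})" by auto
  also have "\<dots> \<in> sets M" using finite_support singleton_sets by (intro sets.finite_UN) auto
  finally have N: "space M - set_pmf p \<in> sets M" by auto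
  have "measure (measure_pmf p) (e -` (space M - set_pmf p)) = 0"
    using e_support by (subst measure_pmf_zero_iff) auto
  then have "emeasure law (space M - set_pmf p) = 0"
    unfolding law_def using emeasure_distr[OF e_measurable N]
    by (simp add: measure_pmf.emeasure_eq_measure)
  then show "space M - set_pmf p \<in> null_sets law" using N by (auto simp: sets_law)
  show "{x \<in> space law. \<not> P x} \<subseteq> space M - set_pmf p" using assms by (auto simp: space_law)
qed

lemma real_cond_exp_law_vimage:
  assumes \<phi>: "\<phi> \<in> measurable M N" and \<phi>_sets: "\<And>\<sigma>. \<sigma> \<in> set_pmf p \<Longrightarrow> {\<phi> \<sigma>} \<in> sets N"
    and g[measurable]: "g \<in> borel_measurable M"
  shows "AE x in law. real_cond_exp law (vimage_algebra (space law) \<phi> N) g x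
    = fibre_mean (set_pmf p) (pmf p) \<phi> g (\<phi> x)"
proof -
  interpret prob_space law by (rule prob_space_law)
  define F where "F = vimage_algebra (space law) \<phi> N"
  have \<phi>_law: "\<phi> \<in> measurable law N" using \<phi> measurable_cong_sets[OF sets_law refl] by blast
  interpret F: sigma_finite_subalgebra law F
    unfolding F_def by (rule sigma_finite_subalgebra_vimage_algebra[OF \<phi>_law])
  let ?S = "set_pmf p"
  let ?\<psi> = "fibre_mean ?S (pmf p) \<phi> g"
  obtain \<psi>' where "\<psi>' \<in> borel_measurable N" and \<psi>'_\<phi>: "\<And>\<sigma>. \<sigma> \<in> ?S \<Longrightarrow> \<psi>' (\<phi> \<sigma>) = ?\<psi> (\<phi> \<sigma>)"
    using borel_measurable_agreeing_on_finite[of "\<phi> ` ?S" N ?\<psi>] finite_support \<phi>_sets by auto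
  then have h_F: "(\<lambda>x. \<psi>' (\<phi> x)) \<in> borel_measurable F"
    unfolding F_def using measurable_space[OF \<phi>_law]
    by (intro measurable_compose[OF measurable_vimage_algebra1]) auto
  have h_M[measurable]: "(\<lambda>x. \<psi>' (\<phi> x)) \<in> borel_measurable M"
    using measurable_from_subalg[OF F.subalg h_F] measurable_cong_sets[OF sets_law refl] by blast
  have "AE x in law. real_cond_exp law F g x = \<psi>' (\<phi> x)"
  proof (rule F.real_cond_exp_charact)
    fix A assume A: "A \<in> sets F"
    have "\<phi> \<in> space law \<rightarrow> space N" using measurable_space[OF \<phi>_law] by auto
    then obtain B where B: "A = \<phi> -` B \<inter> space law"
      using A unfolding F_def by (auto simp: sets_vimage_algebra2)
    have A_M[measurable]: "A \<in> sets M" using A F.subalg sets_law unfolding subalgebra_def by auto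
    have A_\<sigma>: "indicator A \<sigma> = indicator B (\<phi> \<sigma>)" if "\<sigma> \<in> ?S" for \<sigma> :: 'a
      using support_in_space[OF that] by (simp add: B indicator_def space_law)
    have "(\<integral>x\<in>A. g x \<partial>law) = (\<Sum>\<sigma>\<in>?S. pmf p \<sigma> * (indicator B (\<phi> \<sigma>) * g \<sigma>))"
      unfolding set_lebesgue_integral_def by (simp add: integral_law A_\<sigma>)
    also have "\<dots> = (\<Sum>\<sigma>\<in>?S. pmf p \<sigma> * (indicator B (\<phi> \<sigma>) * ?\<psi> (\<phi> \<sigma>)))"
      by (rule sum_mult_fibre_mean[symmetric]) (auto simp: finite_support pmf_positive)
    also have "\<dots> = (\<integral>x\<in>A. \<psi>' (\<phi> x) \<partial>law)"
      unfolding set_lebesgue_integral_def by (simp add: integral_law A_\<sigma> \<psi>'_\<phi>)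
    finally show "(\<integral>x\<in>A. g x \<partial>law) = (\<integral>x\<in>A. \<psi>' (\<phi> x) \<partial>law)" .
  qed (auto simp: integrable_law h_F)
  moreover have "AE x in law. \<psi>' (\<phi> x) = ?\<psi> (\<phi> x)" by (rule AE_law) (simp add: \<psi>'_\<phi>)
  ultimately show ?thesis unfolding F_def by eventually_elim simp
qed

end

section \<open>Markov chains with finitely supported transition laws\<close>

text \<open>The joint law of the first \<open>k\<close> steps of the chain started in \<open>S0\<close> whose step from time
  \<open>j - 1\<close> to time \<open>j\<close> has law \<open>T j\<close>; like the points of \<open>state_space k\<close>, its paths are
  \<open>undefined\<close> outside \<open>{1..k}\<close>.\<close>

fun chain_pmf :: "(nat \<Rightarrow> real \<Rightarrow> real pmf) \<Rightarrow> real \<Rightarrow> nat \<Rightarrow> (nat \<Rightarrow> real) pmf" where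
  "chain_pmf T S0 0 = return_pmf (\<lambda>_. undefined)"
| "chain_pmf T S0 (Suc k) =
    bind_pmf (chain_pmf T S0 k) (\<lambda>\<sigma>. map_pmf (\<lambda>y. \<sigma>(Suc k := y)) (T (Suc k) (Spr S0 \<sigma> k)))"

lemma set_pmf_chain_pmf:
  "\<sigma> \<in> set_pmf (chain_pmf T S0 k) \<Longrightarrow> (\<forall>j. j \<notin> {1..k} \<longrightarrow> \<sigma> j = undefined) \<and>
    (\<forall>j\<in>{1..k}. \<sigma> j \<in> set_pmf (T j (Spr S0 \<sigma> (j - 1))))"
proof (induction k arbitrary: \<sigma>)
  case (Suc k)
  then obtain \<tau> y where \<tau>: "\<tau> \<in> set_pmf (chain_pmf T S0 k)"
    and y: "y \<in> set_pmf (T (Suc k) (Spr S0 \<tau> k))" and \<sigma>: "\<sigma> = \<tau>(Suc k := y)"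
    by auto
  note IH = Suc.IH[OF \<tau>]
  have Spr_eq: "Spr S0 \<sigma> (j - 1) = Spr S0 \<tau> (j - 1)" if "j \<le> Suc k" for j
    using that \<sigma> by (auto simp: Spr_def)
  show ?case
  proof (intro conjI allI ballI impI)
    fix j assume "j \<notin> {1..Suc k}"
    then show "\<sigma> j = undefined" using IH \<sigma> by auto
  next
    fix j assume j: "j \<in> {1..Suc k}"
    then consider "j = Suc k" | "j \<in> {1..k}" by fastforce
    then show "\<sigma> j \<in> set_pmf (T j (Spr S0 \<sigma> (j - 1)))"
      by cases (use y \<sigma> IH Spr_eq[of j] j in auto)
  qed
qed auto

lemma finite_set_pmf_chain_pmf:
  assumes "\<And>j y. finite (set_pmf (T j y))"
  shows "finite (set_pmf (chain_pmf T S0 k))"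
  by (induction k) (auto simp: assms)

lemma map_restrict_chain_pmf:
  assumes "k \<le> m"
  shows "map_pmf (\<lambda>\<sigma>. restrict \<sigma> {1..k}) (chain_pmf T S0 m) = chain_pmf T S0 k"
  using assms
proof (induction rule: dec_induct)
  case base
  show ?case
  proof (rule map_pmf_idI)
    fix \<sigma> assume "\<sigma> \<in> set_pmf (chain_pmf T S0 k)"
    from set_pmf_chain_pmf[OF this] show "restrict \<sigma> {1..k} = \<sigma>"
      by (auto simp: restrict_def fun_eq_iff)
  qed
next
  case (step m)
  have "map_pmf (\<lambda>\<sigma>. restrict \<sigma> {1..k}) (chain_pmf T S0 (Suc m))
      = bind_pmf (chain_pmf T S0 m)
          (\<lambda>\<sigma>. map_pmf (\<lambda>y. restrict (\<sigma>(Suc m := y)) {1..k}) (T (Suc m) (Spr S0 \<sigma> m)))"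
    by (simp add: map_bind_pmf map_pmf_comp)
  also have "\<dots> = bind_pmf (chain_pmf T S0 m)
      (\<lambda>\<sigma>. map_pmf (\<lambda>_. restrict \<sigma> {1..k}) (T (Suc m) (Spr S0 \<sigma> m)))"
    by (intro bind_pmf_cong refl map_pmf_cong) (use step in \<open>auto simp: restrict_def fun_eq_iff\<close>)
  also have "\<dots> = map_pmf (\<lambda>\<sigma>. restrict \<sigma> {1..k}) (chain_pmf T S0 m)"
    by (simp add: map_pmf_def)
  also have "\<dots> = chain_pmf T S0 k" by (rule step.IH)
  finally show ?case .
qed

lemma expectation_restrict_chain_pmf:
  fixes H :: "(nat \<Rightarrow> real) \<Rightarrow> real"
  assumes "k \<le> m"
  shows "measure_pmf.expectation (chain_pmf T S0 m) (\<lambda>\<sigma>. H (restrict \<sigma> {1..k}))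
       = measure_pmf.expectation (chain_pmf T S0 k) H"
  using map_restrict_chain_pmf[OF assms, of T S0] integral_map_pmf[symmetric] by metis

lemma map_Spr_chain_pmf:
  assumes start: "\<nu> 0 = return_pmf S0"
    and step: "\<And>j. j < n \<Longrightarrow> bind_pmf (\<nu> j) (T (Suc j)) = \<nu> (Suc j)"
    and "i \<le> m" "m \<le> n"
  shows "map_pmf (\<lambda>\<sigma>. Spr S0 \<sigma> i) (chain_pmf T S0 m) = \<nu> i"
proof -
  have "map_pmf (\<lambda>\<sigma>. Spr S0 \<sigma> i) (chain_pmf T S0 i) = \<nu> i" if "i \<le> n" for i
    using that
  proof (induction i)
    case (Suc i)
    have "map_pmf (\<lambda>\<sigma>. Spr S0 \<sigma> (Suc i)) (chain_pmf T S0 (Suc i))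
        = bind_pmf (map_pmf (\<lambda>\<sigma>. Spr S0 \<sigma> i) (chain_pmf T S0 i)) (T (Suc i))"
      by (simp add: map_bind_pmf map_pmf_comp bind_map_pmf Spr_def)
    then show ?case using Suc by (simp add: step)
  qed (simp add: start Spr_def)
  moreover have "map_pmf (\<lambda>\<sigma>. Spr S0 \<sigma> i) (chain_pmf T S0 m)
      = map_pmf (\<lambda>\<sigma>. Spr S0 \<sigma> i) (map_pmf (\<lambda>\<sigma>. restrict \<sigma> {1..i}) (chain_pmf T S0 m))"
    by (simp add: map_pmf_comp)
  ultimately show ?thesis using map_restrict_chain_pmf[OF assms(3)] assms(3,4) by simp
qed

lemma expectation_bind_pmf_finite:
  fixes h :: "'b \<Rightarrow> real"
  assumes "finite (set_pmf p)" "\<And>x. x \<in> set_pmf p \<Longrightarrow> finite (set_pmf (f x))"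
  shows "measure_pmf.expectation (bind_pmf p f) h
       = measure_pmf.expectation p (\<lambda>x. measure_pmf.expectation (f x) h)"
proof -
  have "measure_pmf.expectation (bind_pmf p f) h
      = (\<Sum>a\<in>set_pmf p. pmf p a *\<^sub>R measure_pmf.expectation (f a) h)"
    by (rule pmf_expectation_bind) (use assms in auto)
  also have "\<dots> = measure_pmf.expectation p (\<lambda>x. measure_pmf.expectation (f x) h)"
    by (subst integral_measure_pmf_real[of "set_pmf p"]) (use assms in \<open>auto simp: mult.commute\<close>)
  finally show ?thesis .
qed

lemma expectation_chain_pmf_next:
  fixes F :: "(nat \<Rightarrow> real) \<Rightarrow> real" and G :: "real \<Rightarrow> real"
  assumes fin: "\<And>j y. finite (set_pmf (T j y))" and "i < m"
  shows "measure_pmf.expectation (chain_pmf T S0 m) (\<lambda>\<sigma>. F (restrict \<sigma> {1..i}) * G (\<sigma> (Suc i)))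
       = measure_pmf.expectation (chain_pmf T S0 m)
           (\<lambda>\<sigma>. F (restrict \<sigma> {1..i}) * measure_pmf.expectation (T (Suc i) (Spr S0 \<sigma> i)) G)"
    (is "?lhs = ?rhs")
proof -
  define H where "H \<tau> = F (restrict \<tau> {1..i}) * G (\<tau> (Suc i))" for \<tau> :: "nat \<Rightarrow> real"
  define H' where "H' \<tau> = F (restrict \<tau> {1..i}) * measure_pmf.expectation (T (Suc i) (Spr S0 \<tau> i)) G"
    for \<tau> :: "nat \<Rightarrow> real"
  have next_step: "measure_pmf.expectation (T (Suc i) (Spr S0 \<sigma> i)) (\<lambda>y. H (\<sigma>(Suc i := y)))
      = H' \<sigma>" for \<sigma>
  proof -
    have "restrict (\<sigma>(Suc i := y)) {1..i} = restrict \<sigma> {1..i}" for y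
      by (auto simp: restrict_def fun_eq_iff)
    then show ?thesis by (simp add: H_def H'_def)
  qed
  have "?lhs = measure_pmf.expectation (chain_pmf T S0 m) (\<lambda>\<sigma>. H (restrict \<sigma> {1..Suc i}))"
    by (simp add: H_def Int_absorb2)
  also have "\<dots> = measure_pmf.expectation (chain_pmf T S0 (Suc i)) H"
    by (rule expectation_restrict_chain_pmf) (use assms(2) in auto)
  also have "\<dots> = measure_pmf.expectation (chain_pmf T S0 i) H'"
    by (simp only: chain_pmf.simps, subst expectation_bind_pmf_finite)
      (auto simp: finite_set_pmf_chain_pmf fin next_step)
  also have "\<dots> = measure_pmf.expectation (chain_pmf T S0 m) (\<lambda>\<sigma>. H' (restrict \<sigma> {1..i}))"
    by (rule expectation_restrict_chain_pmf[symmetric]) (use assms(2) in auto)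
  also have "\<dots> = ?rhs" by (simp add: H'_def)
  finally show ?thesis .
qed

lemma expectation_if_finite_pmf:
  fixes f :: "'a \<Rightarrow> real"
  assumes "finite (set_pmf p)"
  shows "measure_pmf.expectation p (\<lambda>\<sigma>. if P \<sigma> then f \<sigma> else 0)
       = (\<Sum>\<sigma>\<in>{\<sigma>\<in>set_pmf p. P \<sigma>}. pmf p \<sigma> * f \<sigma>)"
proof -
  have "measure_pmf.expectation p (\<lambda>\<sigma>. if P \<sigma> then f \<sigma> else 0)
      = (\<Sum>\<sigma>\<in>set_pmf p. if P \<sigma> then pmf p \<sigma> * f \<sigma> else 0)"
    by (subst integral_measure_pmf_real) (use assms in \<open>auto intro!: sum.cong\<close>)
  also have "\<dots> = (\<Sum>\<sigma>\<in>{\<sigma>\<in>set_pmf p. P \<sigma>}. pmf p \<sigma> * f \<sigma>)"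
    using assms by (simp add: sum.inter_filter)
  finally show ?thesis .
qed

text \<open>Conditioning the chain on any function \<open>\<phi>\<close> of its past up to time \<open>i\<close> that
  determines the state at time \<open>i\<close> gives the transition law out of that state.\<close>

lemma fibre_mean_chain_pmf:
  fixes G :: "real \<Rightarrow> real"
  assumes fin: "\<And>j y. finite (set_pmf (T j y))" and i: "i < m"
    and past: "\<And>\<sigma>. \<phi> (restrict \<sigma> {1..i}) = \<phi> \<sigma>"
    and state: "\<And>\<sigma>. \<phi> \<sigma> = \<phi> \<sigma>0 \<Longrightarrow> Spr S0 \<sigma> i = Spr S0 \<sigma>0 i"
    and \<sigma>0: "\<sigma>0 \<in> set_pmf (chain_pmf T S0 m)"
  shows "fibre_mean (set_pmf (chain_pmf T S0 m)) (pmf (chain_pmf T S0 m)) \<phi> (\<lambda>\<sigma>. G (\<sigma> (Suc i)))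
      (\<phi> \<sigma>0) = measure_pmf.expectation (T (Suc i) (Spr S0 \<sigma>0 i)) G"
proof -
  define p where "p = chain_pmf T S0 m"
  note \<sigma>0 = \<sigma>0[folded p_def]
  let ?fibre = "{\<sigma>\<in>set_pmf p. \<phi> \<sigma> = \<phi> \<sigma>0}"
  let ?E = "measure_pmf.expectation (T (Suc i) (Spr S0 \<sigma>0 i)) G"
  let ?ind = "\<lambda>\<tau>. if \<phi> \<tau> = \<phi> \<sigma>0 then 1 else 0 :: real"
  have fin_p: "finite (set_pmf p)" unfolding p_def by (rule finite_set_pmf_chain_pmf[OF fin])
  have "(\<Sum>\<sigma>\<in>?fibre. pmf p \<sigma> * G (\<sigma> (Suc i)))
      = measure_pmf.expectation p (\<lambda>\<sigma>. if \<phi> \<sigma> = \<phi> \<sigma>0 then G (\<sigma> (Suc i)) else 0)"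
    by (rule expectation_if_finite_pmf[OF fin_p, symmetric])
  also have "\<dots> = measure_pmf.expectation p (\<lambda>\<sigma>. ?ind (restrict \<sigma> {1..i}) * G (\<sigma> (Suc i)))"
    by (rule Bochner_Integration.integral_cong) (auto simp: past[simplified])
  also have "\<dots> = measure_pmf.expectation p
      (\<lambda>\<sigma>. ?ind (restrict \<sigma> {1..i}) * measure_pmf.expectation (T (Suc i) (Spr S0 \<sigma> i)) G)"
    unfolding p_def by (rule expectation_chain_pmf_next[OF fin i])
  also have "\<dots> = measure_pmf.expectation p (\<lambda>\<sigma>. if \<phi> \<sigma> = \<phi> \<sigma>0 then ?E else 0)"
  proof (rule Bochner_Integration.integral_cong)
    fix \<sigma> show "?ind (restrict \<sigma> {1..i}) * measure_pmf.expectation (T (Suc i) (Spr S0 \<sigma> i)) G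
        = (if \<phi> \<sigma> = \<phi> \<sigma>0 then ?E else 0)"
      using state[of \<sigma>] past[of \<sigma>] by (simp del: Spr_restrict)
  qed simp
  also have "\<dots> = ?E * (\<Sum>\<sigma>\<in>?fibre. pmf p \<sigma>)"
    by (simp add: expectation_if_finite_pmf[OF fin_p] sum_distrib_left mult.commute)
  finally have num: "(\<Sum>\<sigma>\<in>?fibre. pmf p \<sigma> * G (\<sigma> (Suc i))) = ?E * (\<Sum>\<sigma>\<in>?fibre. pmf p \<sigma>)" .
  have "pmf p \<sigma>0 \<le> (\<Sum>\<sigma>\<in>?fibre. pmf p \<sigma>)"
    by (rule member_le_sum) (use \<sigma>0 fin_p in auto)
  then have "(\<Sum>\<sigma>\<in>?fibre. pmf p \<sigma>) > 0" using \<sigma>0 pmf_positive[of \<sigma>0 p] by linarith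
  then show ?thesis unfolding p_def[symmetric] by (simp add: fibre_mean_def num)
qed

lemma (in finite_measure) integral_indicator_mult_finite_range:
  fixes Z :: "'a \<Rightarrow> real" and f :: "real \<Rightarrow> real"
  assumes fin: "finite (Z ` space M)" and [measurable]: "Z \<in> borel_measurable M" "B \<in> sets M"
  shows "(\<integral>x. indicator B x * f (Z x) \<partial>M)
       = (\<Sum>z\<in>Z ` space M. f z * measure M {x\<in>space M. x \<in> B \<and> Z x = z})"
proof -
  have pointwise: "indicator B x * f (Z x)
      = (\<Sum>z\<in>Z ` space M. f z * indicator {x\<in>space M. x \<in> B \<and> Z x = z} x)" if x: "x \<in> space M" for x
  proof -
    have "(\<Sum>z\<in>Z ` space M. f z * indicator {x\<in>space M. x \<in> B \<and> Z x = z} x)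
        = (\<Sum>z\<in>Z ` space M. if z = Z x then f z * indicator B x else 0)"
      by (rule sum.cong) (use x in \<open>auto simp: indicator_def\<close>)
    also have "\<dots> = f (Z x) * indicator B x" using fin x by (simp add: sum.delta')
    finally show ?thesis by simp
  qed
  have "(\<integral>x. indicator B x * f (Z x) \<partial>M)
      = (\<integral>x. (\<Sum>z\<in>Z ` space M. f z * indicator {x\<in>space M. x \<in> B \<and> Z x = z} x) \<partial>M)"
    by (rule Bochner_Integration.integral_cong) (auto simp: pointwise)
  also have "\<dots> = (\<Sum>z\<in>Z ` space M. \<integral>x. f z * indicator {x\<in>space M. x \<in> B \<and> Z x = z} x \<partial>M)"
    by (rule Bochner_Integration.integral_sum)
      (auto intro!: integrable_real_indicator simp: emeasure_finite less_top[symmetric])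
  also have "\<dots> = (\<Sum>z\<in>Z ` space M. f z * measure M {x\<in>space M. x \<in> B \<and> Z x = z})"
    by (intro sum.cong refl) (simp add: Int_absorb2)
  finally show ?thesis .
qed

definition cond_law_pmf :: "'a measure \<Rightarrow> 'a set \<Rightarrow> ('a \<Rightarrow> real) \<Rightarrow> real pmf" where
  "cond_law_pmf M B Z = embed_pmf (\<lambda>z. measure M {x\<in>space M. x \<in> B \<and> Z x = z} / measure M B)"

context finite_measure
begin

context
  fixes Z :: "'a \<Rightarrow> real" and B :: "'a set"
  assumes fin: "finite (Z ` space M)" and Z[measurable]: "Z \<in> borel_measurable M"
    and B[measurable]: "B \<in> sets M" and pos: "measure M B > 0"
begin

lemma pmf_cond_law_pmf:
  "pmf (cond_law_pmf M B Z) z = measure M {x\<in>space M. x \<in> B \<and> Z x = z} / measure M B"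
proof -
  define w where "w z = measure M {x\<in>space M. x \<in> B \<and> Z x = z} / measure M B" for z
  have w_nonneg: "0 \<le> w z" for z by (simp add: w_def)
  have w_out: "w z = 0" if "z \<notin> Z ` space M" for z
  proof -
    have "{x\<in>space M. x \<in> B \<and> Z x = z} = {}" using that by auto
    then have "measure M {x\<in>space M. x \<in> B \<and> Z x = z} = 0" by (simp only: measure_empty)
    then show ?thesis by (simp add: w_def)
  qed
  have "(\<Sum>z\<in>Z ` space M. measure M {x\<in>space M. x \<in> B \<and> Z x = z}) = measure M B"
    using integral_indicator_mult_finite_range[OF fin Z B, of "\<lambda>_. 1"] by (simp add: Int_absorb2)
  then have "(\<Sum>z\<in>Z ` space M. w z) = 1"
    using pos by (simp add: w_def sum_divide_distrib[symmetric])
  then have "(\<integral>\<^sup>+z. ennreal (w z) \<partial>count_space UNIV) = 1"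
    by (subst nn_integral_count_space'[of "Z ` space M"])
      (auto simp: fin w_out w_nonneg sum_ennreal)
  then show ?thesis unfolding cond_law_pmf_def w_def[symmetric]
    by (rule pmf_embed_pmf[rotated]) (simp add: w_nonneg)
qed

lemma set_pmf_cond_law_pmf: "set_pmf (cond_law_pmf M B Z) \<subseteq> Z ` space M"
proof
  fix z assume "z \<in> set_pmf (cond_law_pmf M B Z)"
  then have "measure M {x\<in>space M. x \<in> B \<and> Z x = z} \<noteq> 0"
    by (auto simp: set_pmf_iff pmf_cond_law_pmf)
  then have "{x\<in>space M. x \<in> B \<and> Z x = z} \<noteq> {}" by (metis measure_empty)
  then show "z \<in> Z ` space M" by auto
qed

lemma expectation_cond_law_pmf:
  "measure_pmf.expectation (cond_law_pmf M B Z) f = (\<integral>x. indicator B x * f (Z x) \<partial>M) / measure M B"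
proof -
  have "measure_pmf.expectation (cond_law_pmf M B Z) f
      = (\<Sum>z\<in>Z ` space M. f z * pmf (cond_law_pmf M B Z) z)"
    by (rule integral_measure_pmf_real) (use fin set_pmf_cond_law_pmf in auto)
  also have "\<dots> = (\<integral>x. indicator B x * f (Z x) \<partial>M) / measure M B"
    by (simp add: pmf_cond_law_pmf integral_indicator_mult_finite_range[OF fin Z B] sum_divide_distrib)
  finally show ?thesis .
qed

end

end

section \<open>Discretising a calibrated martingale\<close>

locale calibrated_martingale =
  fixes P :: "(nat \<Rightarrow> real) measure" and S0 :: real and n :: nat
    and Ks :: "nat \<Rightarrow> real set" and C :: "nat \<Rightarrow> real \<Rightarrow> real"
  assumes P_in_M_n: "P \<in> M_n S0 n Ks C" and S0_nonneg: "0 \<le> S0"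
    and finite_Ks: "\<And>i. i \<in> {1..n} \<Longrightarrow> finite (Ks i)"
begin

lemma prob_space_P: "prob_space P" and sets_P: "sets P = sets (state_space n)"
  and calls_fit_P: "calls_fit n Ks C P"
  and integrable_coordinate: "\<And>i. i \<in> {1..n} \<Longrightarrow> integrable P (\<lambda>x. x i)"
  and martingale_P: "\<And>i. i \<in> {1..n} \<Longrightarrow>
    AE x in P. real_cond_exp P (past_alg P (i - 1)) (\<lambda>y. y i) x = Spr S0 x (i - 1)"
  using P_in_M_n by (auto simp: M_n_def)

sublocale prob_space P by (rule prob_space_P)

lemma measurable_coordinate_P [measurable]: "(\<lambda>x. x j) \<in> borel_measurable P"
  by (rule measurable_coordinate[OF sets_P])

lemma coordinate_nonneg: "x \<in> space P \<Longrightarrow> j \<in> {1..n} \<Longrightarrow> 0 \<le> x j"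
  using sets_eq_imp_space_eq[OF sets_P] by (auto simp: space_state_space PiE_def Pi_def)

lemma integrable_indicator_P: "A \<in> sets P \<Longrightarrow> integrable P (indicator A :: _ \<Rightarrow> real)"
  by (rule integrable_const_bound[where B=1]) auto

definition strikes :: "real set" where "strikes = (\<Union>i\<in>{1..n}. Ks i)"

definition strikes_below :: "real \<Rightarrow> real set" where "strikes_below r = {K\<in>strikes. K \<le> r}"

definition profile :: "nat \<Rightarrow> (nat \<Rightarrow> real) \<Rightarrow> nat \<Rightarrow> real set" where
  "profile j x = (\<lambda>l\<in>{1..j}. strikes_below (x l))"

definition profiles :: "nat \<Rightarrow> (nat \<Rightarrow> real set) set" where
  "profiles j = PiE {1..j} (\<lambda>_. Pow strikes)"

definition cell :: "nat \<Rightarrow> (nat \<Rightarrow> real set) \<Rightarrow> (nat \<Rightarrow> real) set" where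
  "cell j h = {x\<in>space P. profile j x = h}"

definition cell_mean :: "nat \<Rightarrow> (nat \<Rightarrow> real set) \<Rightarrow> real" where
  "cell_mean j h = (\<integral>x. indicator (cell j h) x * x j \<partial>P) / measure P (cell j h)"

definition disc_price :: "nat \<Rightarrow> (nat \<Rightarrow> real) \<Rightarrow> real" where
  "disc_price j x = (if j = 0 then S0 else cell_mean j (profile j x))"

definition level :: "nat \<Rightarrow> real \<Rightarrow> (nat \<Rightarrow> real) set" where
  "level j y = {x\<in>space P. disc_price j x = y}"

lemma finite_strikes: "finite strikes"
  unfolding strikes_def using finite_Ks by auto

lemma finite_profiles: "finite (profiles j)"
  unfolding profiles_def by (intro finite_PiE) (auto simp: finite_strikes)

lemma profile_in_profiles: "profile j x \<in> profiles j"
  unfolding profile_def profiles_def strikes_below_def by auto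

lemma profile_eq_iff:
  "profile j x = h \<longleftrightarrow> h \<in> profiles j \<and> (\<forall>l\<in>{1..j}. \<forall>K\<in>strikes. (K \<le> x l) = (K \<in> h l))"
proof
  assume "profile j x = h"
  then show "h \<in> profiles j \<and> (\<forall>l\<in>{1..j}. \<forall>K\<in>strikes. (K \<le> x l) = (K \<in> h l))"
    using profile_in_profiles[of j x] by (auto simp: profile_def strikes_below_def)
next
  assume h: "h \<in> profiles j \<and> (\<forall>l\<in>{1..j}. \<forall>K\<in>strikes. (K \<le> x l) = (K \<in> h l))"
  show "profile j x = h"
  proof
    fix l show "profile j x l = h l"
    proof (cases "l \<in> {1..j}")
      case True
      then have "h l \<subseteq> strikes" using h by (auto simp: profiles_def PiE_def Pi_def)
      then show ?thesis using True h by (auto simp: profile_def strikes_below_def)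
    next
      case False
      then show ?thesis using h by (auto simp: profile_def profiles_def PiE_def extensional_def)
    qed
  qed
qed

lemma measurable_profile:
  assumes coordinates: "\<And>l. l \<in> {1..j} \<Longrightarrow> (\<lambda>x. x l) \<in> borel_measurable M"
  shows "profile j \<in> measurable M (count_space (profiles j))"
proof (subst measurable_count_space_eq2[OF finite_profiles], intro conjI ballI)
  show "profile j \<in> space M \<rightarrow> profiles j" using profile_in_profiles by auto
  fix h assume h: "h \<in> profiles j"
  have "profile j -` {h} \<inter> space M = {x\<in>space M. profile j x = h}" by auto
  also have "\<dots> = {x\<in>space M. \<forall>l\<in>{1..j}. \<forall>K\<in>strikes. (K \<le> x l) = (K \<in> h l)}"
    using h by (simp only: profile_eq_iff) simp
  also have "\<dots> \<in> sets M"
  proof (intro sets.sets_Collect_finite_All finite_strikes)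
    fix l K assume "l \<in> {1..j}"
    note [measurable] = coordinates[OF this]
    show "{x\<in>space M. (K \<le> x l) = (K \<in> h l)} \<in> sets M" by measurable
  qed simp
  finally show "profile j -` {h} \<inter> space M \<in> sets M" .
qed

lemma measurable_disc_price:
  assumes "\<And>l. l \<in> {1..j} \<Longrightarrow> (\<lambda>x. x l) \<in> borel_measurable M"
  shows "disc_price j \<in> borel_measurable M"
proof -
  have "(\<lambda>x. cell_mean j (profile j x)) \<in> borel_measurable M"
    by (rule measurable_compose[OF measurable_profile[OF assms]]) auto
  then show ?thesis unfolding disc_price_def by (cases "j = 0") simp_all
qed

lemma measurable_disc_price_P [measurable]: "disc_price j \<in> borel_measurable P"
  by (rule measurable_disc_price) simp

lemma sets_cell [measurable]: "cell j h \<in> sets P"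
proof (cases "h \<in> profiles j")
  case True
  have "cell j h = profile j -` {h} \<inter> space P" by (auto simp: cell_def)
  then show ?thesis
    using measurable_profile[of j P] True by (simp add: measurable_count_space_eq2[OF finite_profiles])
next
  case False
  then have "cell j h = {}" using profile_in_profiles by (auto simp: cell_def)
  then show ?thesis by simp
qed

lemma sets_level [measurable]: "level j y \<in> sets P"
  unfolding level_def by measurable

lemma disc_price_restrict [simp]: "disc_price j (restrict x {Suc 0..j}) = disc_price j x"
proof -
  have "profile j (restrict x {1..j}) = profile j x" by (auto simp: profile_def fun_eq_iff)
  then show ?thesis by (simp add: disc_price_def)
qed

lemma level_in_past_alg: "level j y \<in> sets (past_alg P j)"
proof -
  let ?M = "\<Pi>\<^sub>M l\<in>{1..j}. (borel :: real measure)"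
  have "disc_price j \<in> borel_measurable ?M" by (rule measurable_disc_price) simp
  then have "disc_price j -` {y} \<inter> space ?M \<in> sets ?M" by (rule measurable_sets) simp
  then have "(\<lambda>x. restrict x {1..j}) -` (disc_price j -` {y} \<inter> space ?M) \<inter> space P
      \<in> sets (past_alg P j)"
    unfolding past_alg_def by (rule in_vimage_algebra)
  also have "(\<lambda>x. restrict x {1..j}) -` (disc_price j -` {y} \<inter> space ?M) \<inter> space P = level j y"
    by (auto simp: level_def space_PiM)
  finally show ?thesis .
qed

lemma finite_range_disc_price: "finite (disc_price j ` space P)"
proof -
  have "disc_price j ` space P \<subseteq> insert S0 (cell_mean j ` profiles j)"
    using profile_in_profiles by (auto simp: disc_price_def)
  then show ?thesis using finite_profiles finite_subset by blast
qed

lemma disc_price_nonneg: "j \<le> n \<Longrightarrow> 0 \<le> disc_price j x"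
  using S0_nonneg
  by (auto simp: disc_price_def cell_mean_def coordinate_nonneg indicator_def
      intro!: divide_nonneg_nonneg integral_nonneg)

lemma integrable_disc_price: "integrable P (disc_price j)"
proof (rule integrable_const_bound[where B="\<Sum>v\<in>disc_price j ` space P. \<bar>v\<bar>"])
  show "AE x in P. norm (disc_price j x) \<le> (\<Sum>v\<in>disc_price j ` space P. \<bar>v\<bar>)"
    using finite_range_disc_price
    by (intro AE_I2) (auto intro!: member_le_sum[of "disc_price j _" _ abs, simplified])
qed simp

lemma integral_indicator_mult_eq_past:
  assumes i: "i \<in> {1..n}" and B: "B \<in> sets (past_alg P (i - 1))"
  shows "(\<integral>x. indicator B x * x i \<partial>P) = (\<integral>x. indicator B x * Spr S0 x (i - 1) \<partial>P)"
proof -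
  interpret F: sigma_finite_subalgebra P "past_alg P (i - 1)"
    by (rule sigma_finite_subalgebra_past_alg[OF prob_space_P sets_P])
  have B_P[measurable]: "B \<in> sets P" using B F.subalg unfolding subalgebra_def by auto
  note measurable_Spr[OF sets_P, measurable]
  have "(\<integral>x. indicator B x * x i \<partial>P)
      = (\<integral>x. indicator B x * real_cond_exp P (past_alg P (i - 1)) (\<lambda>y. y i) x \<partial>P)"
    by (rule F.real_cond_exp_intg(2)[symmetric])
      (use B integrable_mult_indicator[OF B_P integrable_coordinate[OF i]] in auto)
  also have "\<dots> = (\<integral>x. indicator B x * Spr S0 x (i - 1) \<partial>P)"
    by (rule integral_cong_AE) (use martingale_P[OF i] in auto)
  finally show ?thesis .
qed

lemma integral_profile_in_eq_sum_cells:
  fixes f :: "(nat \<Rightarrow> real) \<Rightarrow> real"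
  assumes f: "integrable P f"
  shows "(\<integral>x. indicator {x\<in>space P. profile j x \<in> E} x * f x \<partial>P)
       = (\<Sum>h\<in>profiles j \<inter> E. \<integral>x. indicator (cell j h) x * f x \<partial>P)"
proof -
  have pointwise: "indicator {x\<in>space P. profile j x \<in> E} x * f x
      = (\<Sum>h\<in>profiles j \<inter> E. indicator (cell j h) x * f x)" if x: "x \<in> space P" for x
  proof -
    have "(\<Sum>h\<in>profiles j \<inter> E. indicator (cell j h) x * f x)
        = (\<Sum>h\<in>profiles j \<inter> E. if h = profile j x then f x else 0)"
      by (rule sum.cong) (use x in \<open>auto simp: cell_def\<close>)
    also have "\<dots> = (if profile j x \<in> profiles j \<inter> E then f x else 0)"
      using finite_profiles[of j] by (simp add: sum.delta)
    finally show ?thesis using x profile_in_profiles[of j x] by (auto simp: indicator_def)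
  qed
  have "(\<integral>x. indicator {x\<in>space P. profile j x \<in> E} x * f x \<partial>P)
      = (\<integral>x. (\<Sum>h\<in>profiles j \<inter> E. indicator (cell j h) x * f x) \<partial>P)"
    by (rule Bochner_Integration.integral_cong) (auto simp: pointwise)
  also have "\<dots> = (\<Sum>h\<in>profiles j \<inter> E. \<integral>x. indicator (cell j h) x * f x \<partial>P)"
    by (rule Bochner_Integration.integral_sum) (use integrable_mult_indicator[OF sets_cell f] in auto)
  finally show ?thesis .
qed

lemma integral_eq_sum_cells:
  fixes f :: "(nat \<Rightarrow> real) \<Rightarrow> real"
  assumes "integrable P f"
  shows "(\<integral>x. f x \<partial>P) = (\<Sum>h\<in>profiles j. \<integral>x. indicator (cell j h) x * f x \<partial>P)"
proof -
  have "(\<integral>x. f x \<partial>P) = (\<integral>x. indicator {x\<in>space P. profile j x \<in> UNIV} x * f x \<partial>P)"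
    by (rule Bochner_Integration.integral_cong) auto
  then show ?thesis by (simp only: integral_profile_in_eq_sum_cells[OF assms] Int_UNIV_right)
qed

lemma integral_cell_const: "(\<integral>x. indicator (cell j h) x * c \<partial>P) = c * measure P (cell j h)"
  using sets.sets_into_space[OF sets_cell] by (simp add: Int_absorb2)

lemma integral_cell_coordinate:
  "(\<integral>x. indicator (cell j h) x * x j \<partial>P) = cell_mean j h * measure P (cell j h)"
proof (cases "measure P (cell j h) = 0")
  case True
  then have "cell j h \<in> null_sets P" by (auto simp: null_sets_def emeasure_eq_measure)
  then have "AE x in P. x \<notin> cell j h" by (rule AE_not_in)
  then have "(\<integral>x. indicator (cell j h) x * x j \<partial>P) = (\<integral>x. 0 \<partial>P)"
    by (intro integral_cong_AE) (auto simp: indicator_def)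
  then show ?thesis using True by simp
qed (simp add: cell_mean_def)

lemma integral_cell_disc_price:
  "j \<noteq> 0 \<Longrightarrow> (\<integral>x. indicator (cell j h) x * disc_price j x \<partial>P) = (\<integral>x. indicator (cell j h) x * x j \<partial>P)"
proof -
  assume "j \<noteq> 0"
  then have "(\<integral>x. indicator (cell j h) x * disc_price j x \<partial>P) = (\<integral>x. indicator (cell j h) x * cell_mean j h \<partial>P)"
    by (intro Bochner_Integration.integral_cong) (auto simp: indicator_def cell_def disc_price_def)
  then show ?thesis by (simp add: integral_cell_const integral_cell_coordinate)
qed

lemma integral_profile_in_disc_price:
  assumes j: "j \<in> {1..n}"
  shows "(\<integral>x. indicator {x\<in>space P. profile j x \<in> E} x * disc_price j x \<partial>P)
       = (\<integral>x. indicator {x\<in>space P. profile j x \<in> E} x * x j \<partial>P)"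
  using j integral_cell_disc_price[of j]
  by (simp add: integral_profile_in_eq_sum_cells integrable_disc_price integrable_coordinate)

lemma integral_level_disc_price_Suc:
  assumes j: "Suc k \<in> {1..n}"
  shows "(\<integral>x. indicator (level k y) x * disc_price (Suc k) x \<partial>P) = y * measure P (level k y)"
proof -
  have profile_Suc: "profile k x = restrict (profile (Suc k) x) {1..k}" for x
    by (auto simp: profile_def fun_eq_iff)
  have level_Suc: "level k y = {x\<in>space P. profile (Suc k) x
      \<in> {h. (if k = 0 then S0 else cell_mean k (restrict h {1..k})) = y}}"
    unfolding level_def disc_price_def using profile_Suc by auto
  have "(\<integral>x. indicator (level k y) x * disc_price (Suc k) x \<partial>P)
      = (\<integral>x. indicator (level k y) x * x (Suc k) \<partial>P)"
    unfolding level_Suc by (rule integral_profile_in_disc_price[OF j])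
  also have "\<dots> = (\<integral>x. indicator (level k y) x * Spr S0 x k \<partial>P)"
    using integral_indicator_mult_eq_past[OF j level_in_past_alg] by simp
  also have "\<dots> = (\<integral>x. indicator (level k y) x * disc_price k x \<partial>P)"
  proof (cases "k = 0")
    case False
    have level_k: "level k y = {x\<in>space P. profile k x \<in> {h. cell_mean k h = y}}"
      using False by (auto simp: level_def disc_price_def)
    have "(\<integral>x. indicator (level k y) x * Spr S0 x k \<partial>P) = (\<integral>x. indicator (level k y) x * x k \<partial>P)"
      using False by (simp add: Spr_def)
    also have "\<dots> = (\<integral>x. indicator (level k y) x * disc_price k x \<partial>P)"
      unfolding level_k by (rule integral_profile_in_disc_price[symmetric]) (use False j in auto)
    finally show ?thesis .
  qed (simp add: Spr_def disc_price_def)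
  also have "\<dots> = (\<integral>x. indicator (level k y) x * y \<partial>P)"
    by (rule Bochner_Integration.integral_cong) (auto simp: level_def indicator_def)
  also have "\<dots> = y * measure P (level k y)"
    using sets.sets_into_space[OF sets_level] by (simp add: Int_absorb2)
  finally show ?thesis .
qed

lemma integral_cell_call:
  assumes i: "1 \<le> i" and K: "K \<in> strikes"
  shows "(\<integral>x. indicator (cell i h) x * max (x i - K) 0 \<partial>P)
       = max (\<integral>x. indicator (cell i h) x * (x i - K) \<partial>P) 0"
proof -
  have side: "(K \<le> x i) = (K \<in> h i)" if "x \<in> cell i h" for x
    using that i K by (auto simp: cell_def profile_eq_iff)
  show ?thesis
  proof (cases "K \<in> h i")
    case True
    then have above: "x \<in> cell i h \<Longrightarrow> K \<le> x i" for x using side by blast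
    then have "(\<lambda>x. indicator (cell i h) x * max (x i - K) 0) = (\<lambda>x. indicator (cell i h) x * (x i - K))"
      by (auto simp: indicator_def fun_eq_iff)
    moreover have "0 \<le> (\<integral>x. indicator (cell i h) x * (x i - K) \<partial>P)"
      using above by (intro Bochner_Integration.integral_nonneg) (simp add: indicator_def)
    ultimately show ?thesis by simp
  next
    case False
    then have below: "x \<in> cell i h \<Longrightarrow> x i < K" for x using side by force
    then have "(\<lambda>x. indicator (cell i h) x * max (x i - K) 0) = (\<lambda>_. 0)"
      by (auto simp: indicator_def fun_eq_iff)
    moreover have "0 \<le> (\<integral>x. - (indicator (cell i h) x * (x i - K)) \<partial>P)"
      using below by (intro Bochner_Integration.integral_nonneg) (simp add: indicator_def less_imp_le)
    ultimately show ?thesis by simp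
  qed
qed

lemma integral_cell_call_disc_price:
  assumes i: "i \<in> {1..n}" and K: "K \<in> strikes"
  shows "(\<integral>x. indicator (cell i h) x * max (disc_price i x - K) 0 \<partial>P)
       = (\<integral>x. indicator (cell i h) x * max (x i - K) 0 \<partial>P)"
proof -
  let ?m = "measure P (cell i h)"
  have "(\<integral>x. indicator (cell i h) x * max (disc_price i x - K) 0 \<partial>P)
      = (\<integral>x. indicator (cell i h) x * max (cell_mean i h - K) 0 \<partial>P)"
    by (rule Bochner_Integration.integral_cong) (use i in \<open>auto simp: indicator_def cell_def disc_price_def\<close>)
  also have "\<dots> = max (cell_mean i h - K) 0 * ?m" by (rule integral_cell_const)
  also have "\<dots> = max ((cell_mean i h - K) * ?m) 0" by (simp add: max_mult_distrib_right)
  also have "(cell_mean i h - K) * ?m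
      = (\<integral>x. indicator (cell i h) x * x i \<partial>P) - (\<integral>x. indicator (cell i h) x * K \<partial>P)"
    by (simp add: integral_cell_coordinate integral_cell_const left_diff_distrib)
  also have "\<dots> = (\<integral>x. indicator (cell i h) x * (x i - K) \<partial>P)"
    using integrable_mult_indicator[OF sets_cell integrable_coordinate[OF i]]
      integrable_indicator_P[OF sets_cell]
    by (subst Bochner_Integration.integral_diff[symmetric]) (auto simp: right_diff_distrib)
  finally show ?thesis using i by (simp add: integral_cell_call[OF _ K])
qed

lemma integral_call_disc_price:
  assumes i: "i \<in> {1..n}" and K: "K \<in> Ks i"
  shows "(\<integral>x. max (disc_price i x - K) 0 \<partial>P) = (\<integral>x. max (x i - K) 0 \<partial>P)"
proof -
  have "K \<in> strikes" using i K by (auto simp: strikes_def)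
  then show ?thesis
    using integrable_disc_price[of i] integrable_coordinate[OF i]
    by (simp add: integral_eq_sum_cells[of _ i] integral_cell_call_disc_price[OF i])
qed

section \<open>The discretised Markov chain\<close>

lemmas cond_law_disc_price =
  pmf_cond_law_pmf[OF finite_range_disc_price measurable_disc_price_P]
  set_pmf_cond_law_pmf[OF finite_range_disc_price measurable_disc_price_P]
  expectation_cond_law_pmf[OF finite_range_disc_price measurable_disc_price_P]

definition marginal :: "nat \<Rightarrow> real pmf" where
  "marginal j = cond_law_pmf P (space P) (disc_price j)"

text \<open>The law of \<open>disc_price j\<close> given \<open>disc_price (j - 1) = y\<close>; the chain built from these
  laws never leaves the support of the marginals, so the default branch is never used.\<close>

definition transition :: "nat \<Rightarrow> real \<Rightarrow> real pmf" where
  "transition j y = (if measure P (level (j - 1) y) > 0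
     then cond_law_pmf P (level (j - 1) y) (disc_price j) else return_pmf y)"

lemma pmf_marginal: "pmf (marginal j) y = measure P (level j y)"
  using cond_law_disc_price(1)[of "space P" j y]
  by (simp add: marginal_def prob_space level_def)

lemma set_pmf_marginal: "set_pmf (marginal j) \<subseteq> disc_price j ` space P"
  unfolding marginal_def by (rule cond_law_disc_price(2)) (auto simp: prob_space)

lemma expectation_marginal:
  fixes f :: "real \<Rightarrow> real"
  shows "measure_pmf.expectation (marginal j) f = (\<integral>x. f (disc_price j x) \<partial>P)"
proof -
  have "measure_pmf.expectation (marginal j) f = (\<integral>x. indicator (space P) x * f (disc_price j x) \<partial>P)"
    using cond_law_disc_price(3)[of "space P" j f] by (simp add: marginal_def prob_space)
  also have "\<dots> = (\<integral>x. f (disc_price j x) \<partial>P)" by (rule Bochner_Integration.integral_cong) auto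
  finally show ?thesis .
qed

lemma marginal_0: "marginal 0 = return_pmf S0"
proof (rule pmf_eqI)
  fix z
  have "level 0 z = (if S0 = z then space P else {})" by (auto simp: level_def disc_price_def)
  then show "pmf (marginal 0) z = pmf (return_pmf S0) z"
    by (simp add: pmf_marginal indicator_def prob_space)
qed

lemma finite_set_pmf_transition: "finite (set_pmf (transition j y))"
proof (cases "measure P (level (j - 1) y) > 0")
  case True
  then have "set_pmf (transition j y) \<subseteq> disc_price j ` space P"
    by (simp add: transition_def cond_law_disc_price(2))
  then show ?thesis using finite_range_disc_price finite_subset by blast
qed (simp add: transition_def)

lemma pmf_transition_mult_level:
  "pmf (transition (Suc j) y) z * measure P (level j y)
   = measure P {x\<in>space P. x \<in> level (Suc j) z \<and> disc_price j x = y}"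
proof (cases "measure P (level j y) > 0")
  case True
  have "{x\<in>space P. x \<in> level j y \<and> disc_price (Suc j) x = z}
      = {x\<in>space P. x \<in> level (Suc j) z \<and> disc_price j x = y}"
    by (auto simp: level_def)
  then show ?thesis using True by (simp add: transition_def cond_law_disc_price(1))
next
  case False
  then have "measure P (level j y) = 0" by (simp add: less_le)
  moreover have "measure P {x\<in>space P. x \<in> level (Suc j) z \<and> disc_price j x = y} \<le> measure P (level j y)"
    by (rule finite_measure_mono) (auto simp: level_def)
  ultimately show ?thesis
    using measure_nonneg[of P "{x\<in>space P. x \<in> level (Suc j) z \<and> disc_price j x = y}"] by simp
qed

lemma bind_marginal_transition: "bind_pmf (marginal j) (transition (Suc j)) = marginal (Suc j)"
proof (rule pmf_eqI)
  fix z
  have "pmf (bind_pmf (marginal j) (transition (Suc j))) z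
      = (\<integral>x. pmf (transition (Suc j) (disc_price j x)) z \<partial>P)"
    by (simp add: pmf_bind expectation_marginal)
  also have "\<dots> = (\<integral>x. indicator (space P) x * pmf (transition (Suc j) (disc_price j x)) z \<partial>P)"
    by (rule Bochner_Integration.integral_cong) auto
  also have "\<dots> = (\<Sum>y\<in>disc_price j ` space P. pmf (transition (Suc j) y) z * measure P (level j y))"
    by (subst integral_indicator_mult_finite_range[OF finite_range_disc_price]) (auto simp: level_def)
  also have "\<dots> = (\<integral>x. indicator (level (Suc j) z) x * 1 \<partial>P)"
    by (subst integral_indicator_mult_finite_range[OF finite_range_disc_price])
      (auto simp: pmf_transition_mult_level)
  also have "\<dots> = pmf (marginal (Suc j)) z"
    using sets.sets_into_space[OF sets_level] by (simp add: pmf_marginal Int_absorb2)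
  finally show "pmf (bind_pmf (marginal j) (transition (Suc j))) z = pmf (marginal (Suc j)) z" .
qed

lemma expectation_transition:
  assumes j: "Suc k \<in> {1..n}" and y: "y \<in> set_pmf (marginal k)"
  shows "measure_pmf.expectation (transition (Suc k) y) (\<lambda>z. z) = y"
proof -
  have pos: "measure P (level k y) > 0"
    using y by (simp add: pmf_marginal pmf_positive_iff[symmetric])
  then show ?thesis
    using integral_level_disc_price_Suc[OF j, of y]
    by (simp add: transition_def cond_law_disc_price(3))
qed

lemma expectation_marginal_call:
  assumes "i \<in> {1..n}" and "K \<in> Ks i"
  shows "measure_pmf.expectation (marginal i) (\<lambda>y. max (y - K) 0) = C i K"
  using integral_call_disc_price[OF assms] calls_fit_P assms
  by (simp add: expectation_marginal calls_fit_def)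

lemma disc_price_nonneg_on_marginal: "j \<le> n \<Longrightarrow> y \<in> set_pmf (marginal j) \<Longrightarrow> 0 \<le> y"
  using set_pmf_marginal disc_price_nonneg by blast

definition chain :: "(nat \<Rightarrow> real) pmf" where "chain = chain_pmf transition S0 n"

definition embed :: "(nat \<Rightarrow> real) \<Rightarrow> nat \<Rightarrow> real" where
  "embed \<sigma> = (if \<sigma> \<in> space (state_space n) then \<sigma> else (\<lambda>j\<in>{1..n}. 0))"

lemma finite_set_pmf_chain: "finite (set_pmf chain)"
  unfolding chain_def by (rule finite_set_pmf_chain_pmf[OF finite_set_pmf_transition])

lemma map_Spr_chain: "i \<le> n \<Longrightarrow> map_pmf (\<lambda>\<sigma>. Spr S0 \<sigma> i) chain = marginal i"
  unfolding chain_def by (rule map_Spr_chain_pmf[OF marginal_0 bind_marginal_transition]) auto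

lemma Spr_in_set_pmf_marginal: "\<sigma> \<in> set_pmf chain \<Longrightarrow> i \<le> n \<Longrightarrow> Spr S0 \<sigma> i \<in> set_pmf (marginal i)"
  using map_Spr_chain[of i] by (metis pmf.set_map imageI)

lemma set_pmf_chain_space: "\<sigma> \<in> set_pmf chain \<Longrightarrow> \<sigma> \<in> space (state_space n)"
proof -
  assume \<sigma>: "\<sigma> \<in> set_pmf chain"
  have "0 \<le> \<sigma> j" if "j \<in> {1..n}" for j
    using disc_price_nonneg_on_marginal[OF _ Spr_in_set_pmf_marginal[OF \<sigma>, of j]] that
    by (auto simp: Spr_def)
  then show ?thesis
    using set_pmf_chain_pmf[of \<sigma>] \<sigma> by (auto simp: chain_def space_state_space PiE_def extensional_def)
qed

sublocale chain: finite_pmf_on chain "state_space n" embed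
proof
  show "embed \<in> UNIV \<rightarrow> space (state_space n)"
    by (auto simp: embed_def space_state_space)
  fix \<sigma> assume \<sigma>: "\<sigma> \<in> set_pmf chain"
  then show "embed \<sigma> = \<sigma>" by (simp add: embed_def set_pmf_chain_space)
  have "\<sigma> \<in> space (state_space n)" by (rule set_pmf_chain_space[OF \<sigma>])
  then have "\<sigma> \<in> extensional {1..n}" "\<And>j. j \<in> {1..n} \<Longrightarrow> 0 \<le> \<sigma> j"
    by (auto simp: space_state_space PiE_def Pi_def)
  then show "{\<sigma>} \<in> sets (state_space n)"
    unfolding state_space_def by (intro singleton_in_sets_PiM) (auto simp: sets_restrict_space_iff)
qed (rule finite_set_pmf_chain)

lemma sets_chain_law [measurable_cong]: "sets chain.law = sets (state_space n)"
  by (rule chain.sets_law)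

lemma markov_prop_chain_law: "markov_prop S0 n chain.law"
  unfolding markov_prop_def
proof (intro ballI)
  fix i A assume i: "i \<in> {1..<n}" and [measurable]: "A \<in> sets (borel :: real measure)"
  define g where "g = (\<lambda>y :: nat \<Rightarrow> real. indicator A (y (Suc i)) :: real)"
  have g[measurable]: "g \<in> borel_measurable (state_space n)"
    unfolding g_def using measurable_coordinate[of "state_space n" n] by measurable
  let ?mean = "fibre_mean (set_pmf chain) (pmf chain)"
  have "AE x in chain.law. real_cond_exp chain.law (past_alg chain.law i) g x
      = ?mean (\<lambda>\<sigma>. restrict \<sigma> {1..i}) g (restrict x {1..i})"
    unfolding past_alg_def
    by (rule chain.real_cond_exp_law_vimage[OF measurable_restrict_coordinates _ g])
      (auto intro: singleton_in_sets_PiM)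
  moreover have "AE x in chain.law. real_cond_exp chain.law (curr_alg S0 chain.law i) g x
      = ?mean (\<lambda>\<sigma>. Spr S0 \<sigma> i) g (Spr S0 x i)"
    unfolding curr_alg_def by (rule chain.real_cond_exp_law_vimage[OF measurable_Spr _ g]) auto
  moreover have "AE x in chain.law. ?mean (\<lambda>\<sigma>. restrict \<sigma> {1..i}) g (restrict x {1..i})
      = ?mean (\<lambda>\<sigma>. Spr S0 \<sigma> i) g (Spr S0 x i)"
  proof (rule chain.AE_law)
    fix \<sigma>0 assume \<sigma>0: "\<sigma>0 \<in> set_pmf chain"
    have "i < n" using i by auto
    note transition_mean = fibre_mean_chain_pmf[OF finite_set_pmf_transition this _ _
        \<sigma>0[unfolded chain_def], where G="indicator A", folded chain_def g_def]
    have "?mean (\<lambda>\<sigma>. restrict \<sigma> {1..i}) g (restrict \<sigma>0 {1..i})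
        = measure_pmf.expectation (transition (Suc i) (Spr S0 \<sigma>0 i)) (indicator A)"
    proof (rule transition_mean)
      fix \<sigma> :: "nat \<Rightarrow> real" assume "restrict \<sigma> {1..i} = restrict \<sigma>0 {1..i}"
      then show "Spr S0 \<sigma> i = Spr S0 \<sigma>0 i" by (metis Spr_restrict One_nat_def)
    qed simp
    also have "\<dots> = ?mean (\<lambda>\<sigma>. Spr S0 \<sigma> i) g (Spr S0 \<sigma>0 i)"
      by (rule transition_mean[symmetric]) simp_all
    finally show "?mean (\<lambda>\<sigma>. restrict \<sigma> {1..i}) g (restrict \<sigma>0 {1..i})
        = ?mean (\<lambda>\<sigma>. Spr S0 \<sigma> i) g (Spr S0 \<sigma>0 i)" .
  qed
  ultimately show "AE x in chain.law. real_cond_exp chain.law (past_alg chain.law i) (\<lambda>y. indicator A (y (Suc i))) x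
      = real_cond_exp chain.law (curr_alg S0 chain.law i) (\<lambda>y. indicator A (y (Suc i))) x"
    unfolding g_def by eventually_elim simp
qed

lemma calls_fit_chain_law: "calls_fit n Ks C chain.law"
  unfolding calls_fit_def
proof (intro ballI conjI)
  fix i K assume i: "i \<in> {1..n}" and K: "K \<in> Ks i"
  have [measurable]: "(\<lambda>x. max (x i - K) 0) \<in> borel_measurable (state_space n)"
    using measurable_coordinate[of "state_space n" n] by measurable
  show "integrable chain.law (\<lambda>x. max (x i - K) 0)" by (rule chain.integrable_law) simp
  have "(\<integral>x. max (x i - K) 0 \<partial>chain.law) = measure_pmf.expectation chain (\<lambda>\<sigma>. max (\<sigma> i - K) 0)"
    by (simp add: chain.integral_law integral_measure_pmf_real[OF finite_set_pmf_chain] mult.commute)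
  also have "\<dots> = measure_pmf.expectation (map_pmf (\<lambda>\<sigma>. Spr S0 \<sigma> i) chain) (\<lambda>y. max (y - K) 0)"
    using i by (simp add: Spr_def)
  also have "\<dots> = C i K" using map_Spr_chain[of i] i expectation_marginal_call[OF i K] by simp
  finally show "(\<integral>x. max (x i - K) 0 \<partial>chain.law) = C i K" .
qed

lemma martingale_chain_law:
  assumes i: "i \<in> {1..n}"
  shows "AE x in chain.law. real_cond_exp chain.law (curr_alg S0 chain.law (i - 1)) (\<lambda>y. y i) x
    = Spr S0 x (i - 1)"
proof -
  obtain k where ik: "i = Suc k" and k: "k < n" using i by (cases i) auto
  let ?mean = "fibre_mean (set_pmf chain) (pmf chain)"
  have "AE x in chain.law. real_cond_exp chain.law (curr_alg S0 chain.law k) (\<lambda>y. y i) x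
      = ?mean (\<lambda>\<sigma>. Spr S0 \<sigma> k) (\<lambda>y. y i) (Spr S0 x k)"
    unfolding curr_alg_def
    by (rule chain.real_cond_exp_law_vimage[OF measurable_Spr])
      (auto intro: measurable_coordinate)
  moreover have "AE x in chain.law. ?mean (\<lambda>\<sigma>. Spr S0 \<sigma> k) (\<lambda>y. y i) (Spr S0 x k) = Spr S0 x k"
  proof (rule chain.AE_law)
    fix \<sigma>0 assume \<sigma>0: "\<sigma>0 \<in> set_pmf chain"
    have "?mean (\<lambda>\<sigma>. Spr S0 \<sigma> k) (\<lambda>y. y (Suc k)) (Spr S0 \<sigma>0 k)
        = measure_pmf.expectation (transition (Suc k) (Spr S0 \<sigma>0 k)) (\<lambda>z. z)"
      unfolding chain_def
      by (rule fibre_mean_chain_pmf[OF finite_set_pmf_transition k _ _ \<sigma>0[unfolded chain_def]]) simp_all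
    also have "\<dots> = Spr S0 \<sigma>0 k"
      using expectation_transition Spr_in_set_pmf_marginal[OF \<sigma>0] i k ik by simp
    finally show "?mean (\<lambda>\<sigma>. Spr S0 \<sigma> k) (\<lambda>y. y i) (Spr S0 \<sigma>0 k) = Spr S0 \<sigma>0 k" by (simp add: ik)
  qed
  ultimately show ?thesis unfolding ik by eventually_elim simp
qed

lemma chain_law_in_M_n_Markov: "chain.law \<in> M_n_Markov S0 n Ks C"
proof -
  have "integrable chain.law (\<lambda>x. x i) \<and> (AE x in chain.law.
      real_cond_exp chain.law (curr_alg S0 chain.law (i - 1)) (\<lambda>y. y i) x = Spr S0 x (i - 1))"
    if "i \<in> {1..n}" for i
    using martingale_chain_law[OF that] chain.integrable_law[OF measurable_coordinate[OF refl]] by simp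
  then show ?thesis
    unfolding M_n_Markov_def
    using chain.prob_space_law sets_chain_law markov_prop_chain_law calls_fit_chain_law by blast
qed

end

theorem mainTheorem1:
  fixes S0 :: real and n :: nat and t :: "nat \<Rightarrow> real"
    and Ks :: "nat \<Rightarrow> real set" and C :: "nat \<Rightarrow> real \<Rightarrow> real"
  assumes "S0 > 0" and "n \<ge> 1"
    and "0 < t 1" and "\<And>i. 1 \<le> i \<Longrightarrow> i < n \<Longrightarrow> t i < t (Suc i)"
    and "\<And>i. i \<in> {1..n} \<Longrightarrow> finite (Ks i) \<and> Ks i \<subseteq> {0..}"
  shows "M_n_Markov S0 n Ks C \<noteq> {} \<longleftrightarrow> M_n S0 n Ks C \<noteq> {}"
proof
  assume "M_n_Markov S0 n Ks C \<noteq> {}"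
  then show "M_n S0 n Ks C \<noteq> {}" using M_n_Markov_subset_M_n by blast
next
  assume "M_n S0 n Ks C \<noteq> {}"
  then obtain P where "P \<in> M_n S0 n Ks C" by blast
  then interpret calibrated_martingale P S0 n Ks C
    using assms(1,5) by unfold_locales auto
  show "M_n_Markov S0 n Ks C \<noteq> {}" using chain_law_in_M_n_Markov by blast
qed

end
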